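(* Let $\mathcal S$ be any one of the five step sets $\mathcal A,\mathcal B,\mathcal C,\mathcal D,\mathcal E$, let $k\ge0$ and $Q_k\in S_k$. Then $\sum_{n\ge0}\#_{\mathcal S}\{(0,0)\xrightarrow{n}Q_k\}\,2^{-n}\in\mathbb Q$.
   Context: Let $\mathbb N=\{0,1,2,\dots\}$. For a step set $\mathcal S$, $\#_{\mathcal S}\{(0,0)\xrightarrow{n}(i,j)\}$ is the number of sequences $p_0=(0,0),p_1,\dots,p_n=(i,j)$ of points of $\mathbb N^2$ with $p_m-p_{m-1}\in\mathcal S$ for all $m$. The step sets are $\mathcal A=\{(-1,1),(1,1),(1,-1)\}$, $\mathcal B=\{(-1,1),(0,1),(1,0),(1,-1)\}$, $\mathcal C=\{(-1,1),(0,1),(1,1),(1,0),(1,-1)\}$, $\mathcal D=\{(-1,1),(0,1),(1,-1)\}$, $\mathcal E=\{(-1,1),(0,1),(1,1),(1,-1)\}$. For $k\ge0$, $S_k=\{(k-i,i):0\le i\le k\}$. *)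

theory Defs
  imports Complex_Main
begin

type_synonym pt = "int \<times> int"

definition inN2 :: "pt \<Rightarrow> bool" where
  "inN2 p \<longleftrightarrow> fst p \<ge> 0 \<and> snd p \<ge> 0"

definition stepdiff :: "pt \<Rightarrow> pt \<Rightarrow> pt" where
  "stepdiff a b = (fst b - fst a, snd b - snd a)"

definition num_walks :: "pt set \<Rightarrow> nat \<Rightarrow> pt \<Rightarrow> nat" where
  "num_walks S n Q = card {ps :: pt list. length ps = Suc n \<and> ps ! 0 = (0,0) \<and> ps ! n = Q
       \<and> (\<forall>m\<le>n. inN2 (ps ! m))
       \<and> (\<forall>m<n. stepdiff (ps ! m) (ps ! Suc m) \<in> S)}"

definition stepA :: "pt set" where "stepA = {(-1,1),(1,1),(1,-1)}"
definition stepB :: "pt set" where "stepB = {(-1,1),(0,1),(1,0),(1,-1)}"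
definition stepC :: "pt set" where "stepC = {(-1,1),(0,1),(1,1),(1,0),(1,-1)}"
definition stepD :: "pt set" where "stepD = {(-1,1),(0,1),(1,-1)}"
definition stepE :: "pt set" where "stepE = {(-1,1),(0,1),(1,1),(1,-1)}"

definition diagS :: "nat \<Rightarrow> pt set" where
  "diagS k = {(int (k - i), int i) | i. i \<le> k}"

end

(*
  Each of the five step sets consists of the diagonal steps (-1,1), (1,-1), which keep the
  level x + y fixed, together with some of the steps (0,1), (1,0), (1,1), which raise it.
  Let G(p) be the sum over n of 2^-n times the number of walks of length n from p to Q.
  Splitting off the first step gives G(p) = [p = Q] + 1/2 sum_s G(p + s), where G vanishes
  outside the quadrant and above the level of Q; the series converge by comparison with an
  explicit superharmonic potential. Restricted to one level, the equation says that the second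
  differences of G along the level line are rational combinations of values on higher levels,
  and G vanishes at the two points where the line leaves the quadrant. Such a discrete
  Dirichlet problem has a rational solution when its data are rational, so downward induction
  on the level shows that every value of G, in particular G(0,0), is rational.
*)
theory Submission
  imports Defs "HOL-Library.Product_Plus"
begin

definition walks :: "pt set \<Rightarrow> pt \<Rightarrow> nat \<Rightarrow> pt \<Rightarrow> pt list set" where
  "walks S p n Q = {ps. length ps = Suc n \<and> ps ! 0 = p \<and> ps ! n = Q
       \<and> (\<forall>m\<le>n. inN2 (ps ! m)) \<and> (\<forall>m<n. stepdiff (ps ! m) (ps ! Suc m) \<in> S)}"

lemma num_walks_eq_card_walks: "num_walks S n Q = card (walks S (0, 0) n Q)"
  unfolding num_walks_def walks_def by simp

lemma Cons_Cons_in_walks_Suc: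
  "p # q # ps \<in> walks S p (Suc n) Q \<longleftrightarrow> inN2 p \<and> q - p \<in> S \<and> q # ps \<in> walks S q n Q"
  unfolding walks_def stepdiff_def
  by (auto simp: All_less_Suc2 minus_prod_def simp flip: less_Suc_eq_le)

lemma walks_0: "walks S p 0 Q = (if p = Q \<and> inN2 p then {[p]} else {})"
  unfolding walks_def by (auto simp: length_Suc_conv)

lemma walks_start: "ps \<in> walks S p n Q \<Longrightarrow> ps = p # tl ps"
  unfolding walks_def by (cases ps) auto

lemma walks_outside: "\<not> inN2 p \<Longrightarrow> walks S p n Q = {}"
  unfolding walks_def by force

lemma walks_Suc:
  assumes "inN2 p"
  shows "walks S p (Suc n) Q = (\<Union>s\<in>S. Cons p ` walks S (p + s) n Q)"
proof (intro set_eqI iffI)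
  fix ps assume ps: "ps \<in> walks S p (Suc n) Q"
  then obtain a q qs where "ps = a # q # qs"
    unfolding walks_def by (auto simp: length_Suc_conv)
  with ps have "ps = p # q # qs" by (simp add: walks_def)
  with ps have "q - p \<in> S" "q # qs \<in> walks S (p + (q - p)) n Q"
    by (simp_all add: Cons_Cons_in_walks_Suc)
  with \<open>ps = p # q # qs\<close> show "ps \<in> (\<Union>s\<in>S. Cons p ` walks S (p + s) n Q)"
    by blast
next
  fix ps assume "ps \<in> (\<Union>s\<in>S. Cons p ` walks S (p + s) n Q)"
  then obtain s qs where "s \<in> S" "ps = p # qs" "qs \<in> walks S (p + s) n Q"
    by blast
  moreover from \<open>qs \<in> walks S (p + s) n Q\<close> have "qs = (p + s) # tl qs"
    by (rule walks_start)
  ultimately show "ps \<in> walks S p (Suc n) Q"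
    using assms Cons_Cons_in_walks_Suc[of p "p + s" "tl qs"] by simp
qed

lemma finite_walks: "finite S \<Longrightarrow> finite (walks S p n Q)"
proof (induction n arbitrary: p)
  case (Suc n)
  then show ?case
    by (cases "inN2 p") (simp_all add: walks_Suc walks_outside)
qed (simp add: walks_0)

lemma card_walks_Suc:
  assumes "finite S" "inN2 p"
  shows "card (walks S p (Suc n) Q) = (\<Sum>s\<in>S. card (walks S (p + s) n Q))"
proof -
  have "walks S (p + s) n Q \<inter> walks S (p + t) n Q = {}" if "s \<noteq> t" for s t
    using that walks_start by (metis disjoint_iff add_left_cancel list.inject)
  then have "Cons p ` walks S (p + s) n Q \<inter> Cons p ` walks S (p + t) n Q = {}"
    if "s \<noteq> t" for s t
    using that by (simp add: image_Int[symmetric])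
  then have "card (walks S p (Suc n) Q) = (\<Sum>s\<in>S. card (Cons p ` walks S (p + s) n Q))"
    unfolding walks_Suc[OF assms(2)]
    by (intro card_UN_disjoint assms(1) ballI impI finite_imageI finite_walks)
  then show ?thesis
    by (simp add: card_image)
qed

definition level :: "pt \<Rightarrow> int" where
  "level p = fst p + snd p"

definition diag_steps :: "pt set" where
  "diag_steps = {(-1, 1), (1, -1)}"

definition up_steps :: "pt set" where
  "up_steps = {(0, 1), (1, 0), (1, 1)}"

lemma finite_steps: "S \<subseteq> diag_steps \<union> up_steps \<Longrightarrow> finite S"
  unfolding diag_steps_def up_steps_def by (rule finite_subset) auto

lemma level_add_step: "s \<in> diag_steps \<union> up_steps \<Longrightarrow> level p \<le> level (p + s)"
  unfolding diag_steps_def up_steps_def level_def by auto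

lemma level_add_up_step: "s \<in> up_steps \<Longrightarrow> level p < level (p + s)"
  unfolding up_steps_def level_def by auto

lemma walks_above_level:
  assumes "S \<subseteq> diag_steps \<union> up_steps" "level Q < level p"
  shows "walks S p n Q = {}"
  using assms(2)
proof (induction n arbitrary: p)
  case 0
  then show ?case by (auto simp: walks_0)
next
  case (Suc n)
  have "walks S (p + s) n Q = {}" if "s \<in> S" for s
    using Suc.IH[of "p + s"] Suc.prems level_add_step[of s p] that assms(1) by auto
  then show ?case
    by (cases "inN2 p") (simp_all add: walks_Suc walks_outside)
qed

text \<open>
  Averaging \<open>(x + 1) (y + 1)\<close> over the two diagonal steps lowers it by exactly \<open>1\<close>, and it
  vanishes on the lines \<open>x = -1\<close>, \<open>y = -1\<close> just outside the quadrant. An up-step reaches a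
  higher level, where \<open>(x + 1) (y + 1) \<le> (k + 2)\<^sup>2\<close>, so the factor \<open>3 (k + 2)\<^sup>2\<close> per level
  makes the at most three up-steps together cost no more than this gain of \<open>1\<close>.
\<close>
definition walk_potential :: "int \<Rightarrow> pt \<Rightarrow> real" where
  "walk_potential k p =
    (if inN2 p \<and> level p \<le> k then
       2 * (3 * (real_of_int k + 2)\<^sup>2) ^ nat (k - level p)
         * (real_of_int (fst p) + 1) * (real_of_int (snd p) + 1)
     else 0)"

lemma walk_potential_nonneg: "0 \<le> walk_potential k p"
  unfolding walk_potential_def inN2_def by auto

lemma walk_potential_above_level:
  assumes "inN2 p" "level p \<le> k" "level p < level q"
  shows "walk_potential k q \<le> (2/3) * (3 * (real_of_int k + 2)\<^sup>2) ^ nat (k - level p)"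
proof (cases "inN2 q \<and> level q \<le> k")
  case False
  then have "walk_potential k q = 0"
    unfolding walk_potential_def by (rule if_not_P)
  then show ?thesis by simp
next
  case True
  define B where "B = 3 * (real_of_int k + 2)\<^sup>2"
  have "k \<ge> 0" using assms by (auto simp: inN2_def level_def)
  then have "1 \<le> (real_of_int k + 2)\<^sup>2" by (intro one_le_power) auto
  then have "B \<ge> 1" unfolding B_def by simp
  have "Suc (nat (k - level q)) \<le> nat (k - level p)"
    using assms True by auto
  then have "B * B ^ nat (k - level q) \<le> B ^ nat (k - level p)"
    using power_increasing[OF _ \<open>B \<ge> 1\<close>] by (metis power_Suc)
  have coords:
    "(real_of_int (fst q) + 1) * (real_of_int (snd q) + 1) \<le> (real_of_int k + 2)\<^sup>2"
    unfolding power2_eq_square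
    by (rule mult_mono) (use True in \<open>auto simp: inN2_def level_def\<close>)
  have "walk_potential k q
      = 2 * B ^ nat (k - level q) * ((real_of_int (fst q) + 1) * (real_of_int (snd q) + 1))"
    using True by (simp add: walk_potential_def B_def)
  also have "\<dots> \<le> 2 * B ^ nat (k - level q) * (real_of_int k + 2)\<^sup>2"
    using coords \<open>B \<ge> 1\<close> by (intro mult_left_mono) auto
  also have "\<dots> = (2/3) * (B * B ^ nat (k - level q))"
    unfolding B_def by simp
  also have "\<dots> \<le> (2/3) * B ^ nat (k - level p)"
    using \<open>B * B ^ nat (k - level q) \<le> B ^ nat (k - level p)\<close> by simp
  finally show ?thesis unfolding B_def .
qed

lemma walk_potential_superharmonic:
  assumes "inN2 p" "level Q \<le> k"
  shows "(if p = Q then 1 else 0)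
      + (1/2) * (\<Sum>s\<in>diag_steps \<union> up_steps. walk_potential k (p + s))
    \<le> walk_potential k p"
proof (cases "level p \<le> k")
  case False
  then have "p \<noteq> Q" using assms(2) by auto
  moreover have "walk_potential k (p + s) = 0" if "s \<in> diag_steps \<union> up_steps" for s
    using False level_add_step[OF that, of p] by (simp add: walk_potential_def)
  ultimately show ?thesis by (simp add: walk_potential_nonneg)
next
  case True
  obtain x y where p: "p = (x, y)" by fastforce
  have "x \<ge> 0" "y \<ge> 0" using assms(1) by (auto simp: p inN2_def)
  define E where "E = (3 * (real_of_int k + 2)\<^sup>2) ^ nat (k - level p)"
  have "k \<ge> 0" using True \<open>x \<ge> 0\<close> \<open>y \<ge> 0\<close> by (simp add: level_def p)
  then have "1 \<le> (real_of_int k + 2)\<^sup>2" by (intro one_le_power) auto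
  then have "E \<ge> 1" unfolding E_def by (intro one_le_power) simp
  have left: "walk_potential k (p + (-1, 1)) = 2 * E * x * (y + 2)"
    using True \<open>x \<ge> 0\<close> \<open>y \<ge> 0\<close>
    by (cases "x = 0") (auto simp: walk_potential_def p E_def inN2_def level_def algebra_simps)
  have right: "walk_potential k (p + (1, -1)) = 2 * E * (x + 2) * y"
    using True \<open>x \<ge> 0\<close> \<open>y \<ge> 0\<close>
    by (cases "y = 0") (auto simp: walk_potential_def p E_def inN2_def level_def algebra_simps)
  have "(\<Sum>s\<in>up_steps. walk_potential k (p + s)) \<le> of_nat (card up_steps) * ((2/3) * E)"
    using walk_potential_above_level[OF assms(1) True] level_add_up_step
    by (intro sum_bounded_above) (simp add: E_def)
  also have "\<dots> = 2 * E"
    by (simp add: up_steps_def)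
  finally have up: "(\<Sum>s\<in>up_steps. walk_potential k (p + s)) \<le> 2 * E" .
  have "(\<Sum>s\<in>diag_steps \<union> up_steps. walk_potential k (p + s))
      = walk_potential k (p + (-1, 1)) + walk_potential k (p + (1, -1))
        + (\<Sum>s\<in>up_steps. walk_potential k (p + s))"
    by (subst sum.union_disjoint) (auto simp: diag_steps_def up_steps_def)
  moreover have "walk_potential k p = 2 * E * (x + 1) * (y + 1)"
    using True \<open>x \<ge> 0\<close> \<open>y \<ge> 0\<close> by (simp add: walk_potential_def p E_def inN2_def)
  moreover have "(if p = Q then 1 else 0) \<le> E"
    using \<open>E \<ge> 1\<close> by simp
  ultimately show ?thesis
    using up unfolding left right by (simp add: algebra_simps)
qed

lemma walk_series_partial_sum_le_potential:
  assumes "S \<subseteq> diag_steps \<union> up_steps" "level Q \<le> k"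
  shows "(\<Sum>m<N. real (card (walks S p m Q)) / 2 ^ m) \<le> walk_potential k p"
proof (induction N arbitrary: p)
  case 0
  then show ?case by (simp add: walk_potential_nonneg)
next
  case (Suc N)
  show ?case
  proof (cases "inN2 p")
    case False
    then show ?thesis by (simp add: walks_outside walk_potential_nonneg)
  next
    case True
    have "finite S" using assms(1) by (rule finite_steps)
    have "(\<Sum>m<Suc N. real (card (walks S p m Q)) / 2 ^ m)
        = (if p = Q then 1 else 0) + (\<Sum>m<N. real (card (walks S p (Suc m) Q)) / 2 ^ Suc m)"
      using True unfolding sum.lessThan_Suc_shift by (simp add: walks_0)
    also have "(\<Sum>m<N. real (card (walks S p (Suc m) Q)) / 2 ^ Suc m)
        = (\<Sum>m<N. (1/2) * (\<Sum>s\<in>S. real (card (walks S (p + s) m Q)) / 2 ^ m))"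
      using card_walks_Suc[OF \<open>finite S\<close> True] by (simp add: sum_divide_distrib mult.commute)
    also have "\<dots> = (1/2) * (\<Sum>s\<in>S. \<Sum>m<N. real (card (walks S (p + s) m Q)) / 2 ^ m)"
      by (simp add: sum_distrib_left sum.swap[of _ "{..<N}"])
    also have "(\<Sum>s\<in>S. \<Sum>m<N. real (card (walks S (p + s) m Q)) / 2 ^ m)
        \<le> (\<Sum>s\<in>S. walk_potential k (p + s))"
      by (intro sum_mono Suc.IH)
    also have "\<dots> \<le> (\<Sum>s\<in>diag_steps \<union> up_steps. walk_potential k (p + s))"
      using assms(1)
      by (intro sum_mono2) (auto simp: walk_potential_nonneg diag_steps_def up_steps_def)
    finally show ?thesis
      using walk_potential_superharmonic[OF True assms(2)] by simp
  qed
qed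

lemma summable_walk_series:
  assumes "S \<subseteq> diag_steps \<union> up_steps"
  shows "summable (\<lambda>m. real (card (walks S p m Q)) / 2 ^ m)"
  by (rule summableI_nonneg_bounded[where x = "walk_potential (level Q) p"])
     (use walk_series_partial_sum_le_potential[OF assms order.refl] in auto)

definition walk_gf :: "pt set \<Rightarrow> pt \<Rightarrow> pt \<Rightarrow> real" where
  "walk_gf S Q p = (\<Sum>n. real (card (walks S p n Q)) / 2 ^ n)"

lemma walk_gf_outside: "\<not> inN2 p \<Longrightarrow> walk_gf S Q p = 0"
  by (simp add: walk_gf_def walks_outside)

lemma walk_gf_above_level:
  "S \<subseteq> diag_steps \<union> up_steps \<Longrightarrow> level Q < level p \<Longrightarrow> walk_gf S Q p = 0"
  by (simp add: walk_gf_def walks_above_level)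

lemma walk_gf_first_step:
  assumes "S \<subseteq> diag_steps \<union> up_steps" "inN2 p"
  shows "walk_gf S Q p = (if p = Q then 1 else 0) + (1/2) * (\<Sum>s\<in>S. walk_gf S Q (p + s))"
proof -
  define f where "f s = (\<lambda>m. real (card (walks S (p + s) m Q)) / 2 ^ m)" for s
  have "finite S" using assms(1) by (rule finite_steps)
  have summable: "summable (f s)" for s
    unfolding f_def using assms(1) by (rule summable_walk_series)
  have "walk_gf S Q p
      = real (card (walks S p 0 Q)) + (\<Sum>m. real (card (walks S p (Suc m) Q)) / 2 ^ Suc m)"
    unfolding walk_gf_def using summable_walk_series[OF assms(1)] by (subst suminf_split_head) auto
  also have "(\<Sum>m. real (card (walks S p (Suc m) Q)) / 2 ^ Suc m)
      = (\<Sum>m. (1/2) * (\<Sum>s\<in>S. f s m))"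
    using card_walks_Suc[OF \<open>finite S\<close> assms(2)]
    by (simp add: f_def sum_divide_distrib mult.commute)
  also have "\<dots> = (1/2) * (\<Sum>m. \<Sum>s\<in>S. f s m)"
    by (rule suminf_mult) (intro summable_sum summable)
  also have "(\<Sum>m. \<Sum>s\<in>S. f s m) = (\<Sum>s\<in>S. suminf (f s))"
    by (rule suminf_sum) (rule summable)
  finally show ?thesis
    using assms(2) by (simp add: walks_0 walk_gf_def f_def)
qed

lemma Rats_of_second_differences:
  fixes g :: "nat \<Rightarrow> real"
  assumes "g 0 \<in> \<rat>" "g (Suc L) \<in> \<rat>"
    and second_diff: "\<And>m. m < L \<Longrightarrow> g (Suc (Suc m)) - 2 * g (Suc m) + g m \<in> \<rat>"
    and "m \<le> Suc L"
  shows "g m \<in> \<rat>"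
proof -
  \<comment> \<open>Up to a rational error \<open>g\<close> is affine; its value at \<open>Suc L\<close> pins down the slope.\<close>
  define d where "d = g 1 - g 0"
  have affine: "g m - of_nat m * d \<in> \<rat>" if "m \<le> Suc L" for m
    using that
  proof (induction m rule: less_induct)
    case (less m)
    consider "m = 0" | "m = 1" | k where "m = Suc (Suc k)"
      by (metis One_nat_def not0_implies_Suc)
    then show ?case
    proof cases
      case 3
      have diff: "g (Suc (Suc k)) - 2 * g (Suc k) + g k \<in> \<rat>"
        using second_diff less.prems 3 by simp
      have "g (Suc k) - of_nat (Suc k) * d \<in> \<rat>" "g k - of_nat k * d \<in> \<rat>"
        using less.IH[of "Suc k"] less.IH[of k] less.prems 3 by simp_all
      then have "(g (Suc (Suc k)) - 2 * g (Suc k) + g k)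
          + 2 * (g (Suc k) - of_nat (Suc k) * d) - (g k - of_nat k * d) \<in> \<rat>"
        by (metis diff Rats_add Rats_diff Rats_mult Rats_number_of)
      then show ?thesis
        by (simp add: 3 algebra_simps)
    qed (use assms(1) in \<open>simp_all add: d_def\<close>)
  qed
  have "g (Suc L) - (g (Suc L) - of_nat (Suc L) * d) \<in> \<rat>"
    by (rule Rats_diff[OF assms(2) affine[OF order.refl]])
  then have "of_nat (Suc L) * d \<in> \<rat>" by simp
  then have "of_nat (Suc L) * d / of_nat (Suc L) \<in> \<rat>"
    by (rule Rats_divide) (rule Rats_of_nat)
  then have "d \<in> \<rat>" by simp
  have "g m = (g m - of_nat m * d) + of_nat m * d" by simp
  also have "\<dots> \<in> \<rat>"
    using affine[OF assms(4)] \<open>d \<in> \<rat>\<close> by (intro Rats_add Rats_mult) auto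
  finally show ?thesis .
qed

lemma walk_equation_Rats_on_level:
  fixes F r :: "pt \<Rightarrow> real"
  assumes steps: "diag_steps \<subseteq> S" "S \<subseteq> diag_steps \<union> up_steps"
    and outside: "\<And>q. \<not> inN2 q \<Longrightarrow> F q = 0"
    and equation: "\<And>q. inN2 q \<Longrightarrow> F q = r q + (1/2) * (\<Sum>s\<in>S. F (q + s))"
    and r: "\<And>q. r q \<in> \<rat>"
    and above: "\<And>q. level p < level q \<Longrightarrow> F q \<in> \<rat>"
  shows "F p \<in> \<rat>"
proof (cases "inN2 p")
  case False
  then show ?thesis using outside by simp
next
  case True
  define j where "j = level p"
  have "j \<ge> 0" using True by (simp add: j_def level_def inN2_def)
  \<comment> \<open>\<open>g\<close> runs along the level line; \<open>g 0\<close>, \<open>g (j + 2)\<close> lie just outside the quadrant.\<close>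
  define g where "g m = F (j + 1 - int m, int m - 1)" for m
  have boundary: "g 0 = 0" "g (Suc (Suc (nat j))) = 0"
    using \<open>j \<ge> 0\<close> by (simp_all add: g_def outside inN2_def)
  have second_diff: "g (Suc (Suc m)) - 2 * g (Suc m) + g m \<in> \<rat>" if "m < Suc (nat j)" for m
  proof -
    define q where "q = (j - int m, int m)"
    have "inN2 q" using that \<open>j \<ge> 0\<close> by (simp add: q_def inN2_def)
    have "finite S" using steps(2) by (rule finite_steps)
    have "(\<Sum>s\<in>S - diag_steps. F (q + s)) \<in> \<rat>"
    proof (intro Rats_sum above)
      fix s assume "s \<in> S - diag_steps"
      then have "s \<in> up_steps" using steps(2) by blast
      then show "level p < level (q + s)"
        using level_add_up_step[of s q] by (simp add: q_def level_def j_def)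
    qed
    moreover have "(\<Sum>s\<in>diag_steps. F (q + s)) = g (Suc (Suc m)) + g m"
      by (simp add: diag_steps_def g_def q_def add.commute diff_diff_eq add_diff_eq)
    moreover have "(\<Sum>s\<in>S. F (q + s))
        = (\<Sum>s\<in>S - diag_steps. F (q + s)) + (\<Sum>s\<in>diag_steps. F (q + s))"
      by (rule sum.subset_diff[OF steps(1) \<open>finite S\<close>])
    moreover have "g (Suc m) = F q" by (simp add: g_def q_def)
    ultimately have "g (Suc (Suc m)) - 2 * g (Suc m) + g m
        = - 2 * r q - (\<Sum>s\<in>S - diag_steps. F (q + s))"
      using equation[OF \<open>inN2 q\<close>] by linarith
    then show ?thesis
      using r \<open>(\<Sum>s\<in>S - diag_steps. F (q + s)) \<in> \<rat>\<close> by simp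
  qed
  have index: "nat (snd p) + 1 \<le> Suc (Suc (nat j))"
    using True unfolding j_def level_def inN2_def by arith
  have "g (nat (snd p) + 1) \<in> \<rat>"
    by (rule Rats_of_second_differences[where g = g, OF _ _ second_diff index])
       (simp_all add: boundary)
  moreover have "g (nat (snd p) + 1) = F p"
    using True by (cases p) (simp add: g_def j_def level_def inN2_def)
  ultimately show ?thesis by simp
qed

lemma walk_equation_Rats:
  fixes F r :: "pt \<Rightarrow> real"
  assumes steps: "diag_steps \<subseteq> S" "S \<subseteq> diag_steps \<union> up_steps"
    and outside: "\<And>q. \<not> inN2 q \<Longrightarrow> F q = 0"
    and equation: "\<And>q. inN2 q \<Longrightarrow> F q = r q + (1/2) * (\<Sum>s\<in>S. F (q + s))"
    and r: "\<And>q. r q \<in> \<rat>"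
    and top: "\<And>q. k < level q \<Longrightarrow> F q = 0"
  shows "F p \<in> \<rat>"
proof -
  have levels: "\<forall>q. i \<le> level q \<longrightarrow> F q \<in> \<rat>" if "i \<le> k + 1" for i
    using that
  proof (induction i rule: int_le_induct)
    case base
    then show ?case using top by simp
  next
    case (step i)
    show ?case
    proof (intro allI impI)
      fix q assume "i - 1 \<le> level q"
      then consider "i \<le> level q" | "level q = i - 1" by linarith
      then show "F q \<in> \<rat>"
      proof cases
        case 2
        show ?thesis
          by (rule walk_equation_Rats_on_level[OF steps outside equation r])
             (use 2 step.IH in auto)
      qed (use step.IH in blast)
    qed
  qed
  show ?thesis
  proof (cases "level p \<le> k + 1")
    case True
    then show ?thesis using levels[of "level p"] by blast
  qed (simp add: top)
qed

lemma walk_gf_Rats: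
  assumes "diag_steps \<subseteq> S" "S \<subseteq> diag_steps \<union> up_steps"
  shows "walk_gf S Q p \<in> \<rat>"
proof (rule walk_equation_Rats[where r = "\<lambda>q. if q = Q then 1 else 0" and k = "level Q",
      OF assms])
  show "walk_gf S Q q = 0" if "\<not> inN2 q" for q
    using that by (rule walk_gf_outside)
  show "walk_gf S Q q = (if q = Q then 1 else 0) + (1/2) * (\<Sum>s\<in>S. walk_gf S Q (q + s))"
    if "inN2 q" for q
    using assms(2) that by (rule walk_gf_first_step)
  show "walk_gf S Q q = 0" if "level Q < level q" for q
    using assms(2) that by (rule walk_gf_above_level)
qed simp

theorem proposition2p12:
  fixes S :: "pt set" and k :: nat and Q :: pt
  assumes "S \<in> {stepA, stepB, stepC, stepD, stepE}"
    and "Q \<in> diagS k"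
  shows "\<exists>q\<in>\<rat>. (\<lambda>n. real (num_walks S n Q) / 2 ^ n) sums q"
proof -
  have steps: "diag_steps \<subseteq> S" "S \<subseteq> diag_steps \<union> up_steps"
    using assms(1)
    by (auto simp: stepA_def stepB_def stepC_def stepD_def stepE_def diag_steps_def up_steps_def)
  have "(\<lambda>n. real (num_walks S n Q) / 2 ^ n) sums walk_gf S Q (0, 0)"
    unfolding num_walks_eq_card_walks walk_gf_def
    by (intro summable_sums summable_walk_series steps(2))
  with walk_gf_Rats[OF steps] show ?thesis by blast
qed

end
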